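(* Let $a_m=\binom{2m-1}{m}$ for $m\ge1$. For $n\ge1$ let $A_n$ be the $(n+1)\times(n+1)$ matrix whose first row is $(1,4,4^2,\dots,4^n)$ and whose row $i+1$ (for $i=1,\dots,n$) is $(a_i,a_{i+1},\dots,a_{i+n})$, and let $A'_n$ be the $(n+1)\times(n+1)$ matrix whose first row is $(1,4,\dots,4^n)$ and whose row $i+1$ (for $i=1,\dots,n$) is $(a_{i+1},a_{i+2},\dots,a_{i+1+n})$. Then for all $n\ge1$: $\det A_n=(-1)^n$ and $\det A'_n=(-1)^n(n+1)$. *)

theory Defs
  imports Main "Jordan_Normal_Form.Determinant"
begin

definition a_seq :: "nat \<Rightarrow> int" where
  "a_seq m = int ((2*m - 1) choose m)"

definition A_mat :: "nat \<Rightarrow> int mat" where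
  "A_mat n = mat (n+1) (n+1) (\<lambda>(i,j). if i = 0 then 4^j else a_seq (i + j))"

definition A'_mat :: "nat \<Rightarrow> int mat" where
  "A'_mat n = mat (n+1) (n+1) (\<lambda>(i,j). if i = 0 then 4^j else a_seq (i + 1 + j))"

end

theory Submission
  imports Defs
begin

text \<open>
  Subtracting 4 times each column of \<open>A\<^sub>n\<close> from the next turns the first row into
  \<open>(1, 0, \<dots>, 0)\<close> and, since \<open>a\<^sub>m\<^sub>+\<^sub>1 - 4 a\<^sub>m = -C\<^sub>m\<close> (Catalan numbers),
  the remaining block into the negated Hankel matrix \<open>(C\<^sub>i\<^sub>+\<^sub>j\<^sub>+\<^sub>s\<^sub>-\<^sub>1)\<close>,
  with \<open>s = 0\<close> for \<open>A\<^sub>n\<close> and \<open>s = 1\<close> for \<open>A'\<^sub>n\<close>.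
  Splitting a Dyck path after \<open>2i - 1\<close> steps factors this Hankel matrix as \<open>L U\<^sub>s\<close> with
  \<open>L\<^sub>i\<^sub>k = b(2i - 1, 2k - 1)\<close> and \<open>(U\<^sub>s)\<^sub>k\<^sub>j = b(2(j + s) - 1, 2k - 1)\<close>, where \<open>b(m, h)\<close>
  counts the \<open>\<plusminus>1\<close>-walks of length \<open>m\<close> from 0 to \<open>h\<close> that never go below 0.
  \<open>L\<close> and \<open>U\<^sub>0\<close> are unitriangular, which gives \<open>(-1)\<^sup>n\<close>. Two further steps change the
  height by \<open>-2\<close>, \<open>0\<close> (in two ways) or \<open>+2\<close>, so \<open>U\<^sub>1 = T U\<^sub>0\<close> for the tridiagonal
  matrix \<open>T\<close> with entries \<open>1, 2, 1\<close>, and \<open>det T = n + 1\<close>.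
\<close>

text \<open>By the reflection principle, \<open>ballot m h\<close> is the number \<open>b(m, h)\<close> above;
  \<open>ballot (2 * m) 0\<close> is the \<open>m\<close>-th Catalan number.\<close>

definition ballot :: "nat \<Rightarrow> nat \<Rightarrow> int" where
  "ballot m h =
    (if even (m + h) then int (m choose ((m + h) div 2)) - int (m choose ((m + h) div 2 + 1)) else 0)"

lemma ballot_0_left: "ballot 0 h = (if h = 0 then 1 else 0)"
  by (auto simp: ballot_def)

lemma ballot_eq_0_if_gt: "m < h \<Longrightarrow> ballot m h = 0"
proof -
  assume "m < h"
  then have "even (m + h) \<Longrightarrow> m < (m + h) div 2" by presburger
  then show ?thesis by (auto simp: ballot_def binomial_eq_0)
qed

lemma ballot_diag [simp]: "ballot m m = 1"
  by (simp add: ballot_def)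

lemma ballot_eq_0_if_odd: "odd (m + h) \<Longrightarrow> ballot m h = 0"
  by (simp add: ballot_def)

lemma ballot_Suc:
  "ballot (Suc m) h = (case h of 0 \<Rightarrow> 0 | Suc g \<Rightarrow> ballot m g) + ballot m (Suc h)"
proof (cases "even (Suc m + h)")
  case False
  then show ?thesis by (cases h) (auto simp: ballot_def)
next
  case True
  then obtain j where j: "Suc m + h = 2 * j" by blast
  have pascal: "Suc m choose j = (m choose (j - 1)) + (m choose j)" if "j \<ge> 1"
    using that by (metis Suc_diff_1 binomial_Suc_Suc less_eq_Suc_le One_nat_def)
  show ?thesis
  proof (cases h)
    case 0
    with j have m: "m = 2 * j - 1" "j \<ge> 1" by auto
    have "m choose (j - 1) = m choose j"
      using binomial_symmetric[of "j - 1" m] m by simp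
    moreover have "Suc m choose Suc j = (m choose j) + (m choose Suc j)"
      by simp
    moreover have "even (Suc m)" "Suc m div 2 = j" using 0 j by simp_all
    ultimately show ?thesis using 0 pascal[OF m(2)] by (simp add: ballot_def)
  next
    case (Suc g)
    with j have "(m + g) div 2 = j - 1" "(m + Suc h) div 2 = j" "j \<ge> 1"
      "even (m + g)" "even (m + Suc h)" "(Suc m + h) div 2 = j"
      by presburger+
    then show ?thesis using Suc pascal by (simp add: ballot_def)
  qed
qed

lemma ballot_Suc_Suc:
  "ballot (Suc (Suc m)) (Suc h) =
     (if h = 0 then 0 else ballot m (h - 1)) + 2 * ballot m (Suc h) + ballot m (h + 3)"
  by (cases h) (simp_all add: ballot_Suc numeral_3_eq_3)

lemma ballot_convolution:
  "m < N \<Longrightarrow> (\<Sum>h<N. ballot m h * ballot m' h) = ballot (m + m') 0"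
proof (induction m arbitrary: m' N)
  case 0
  have "(\<Sum>h<N. ballot 0 h * ballot m' h) = (\<Sum>h<N. if h = 0 then ballot m' h else 0)"
    by (rule sum.cong) (auto simp: ballot_0_left)
  with 0 show ?case by simp
next
  case (Suc m)
  then obtain N' where N: "N = Suc (Suc N')" and "m \<le> N'"
    by (metis Suc_le_D Suc_le_eq le_eq_less_or_eq not_less_eq_eq)
  have IH: "(\<Sum>g<Suc N'. ballot m g * ballot (Suc m') g) = ballot (m + Suc m') 0"
    using Suc.IH[of "Suc N'" "Suc m'"] \<open>m \<le> N'\<close> by simp
  have "(\<Sum>h<N. ballot (Suc m) h * ballot m' h)
     = (\<Sum>h<N. (case h of 0 \<Rightarrow> 0 | Suc g \<Rightarrow> ballot m g) * ballot m' h)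
       + (\<Sum>h<N. ballot m (Suc h) * ballot m' h)"
    by (simp add: ballot_Suc distrib_right sum.distrib)
  also have "(\<Sum>h<N. (case h of 0 \<Rightarrow> 0 | Suc g \<Rightarrow> ballot m g) * ballot m' h)
      = (\<Sum>g<Suc N'. ballot m g * ballot m' (Suc g))"
    unfolding N by (subst sum.lessThan_Suc_shift) simp
  also have "(\<Sum>h<N. ballot m (Suc h) * ballot m' h) = (\<Sum>h<N'. ballot m (Suc h) * ballot m' h)"
    unfolding N using \<open>m \<le> N'\<close> by (simp add: ballot_eq_0_if_gt)
  also have "\<dots> = (\<Sum>g<Suc N'. (case g of 0 \<Rightarrow> 0 | Suc g' \<Rightarrow> ballot m' g') * ballot m g)"
    by (subst sum.lessThan_Suc_shift) (simp add: mult.commute)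
  finally show ?case using IH
    by (simp add: ballot_Suc[of m'] distrib_left sum.distrib algebra_simps)
qed

lemma sum_odd_eq_sum_if_even_0:
  fixes f :: "nat \<Rightarrow> 'a :: comm_monoid_add"
  assumes "\<And>h. even h \<Longrightarrow> f h = 0"
  shows "(\<Sum>k = 1..n. f (2 * k - 1)) = (\<Sum>h < Suc (2 * n). f h)"
proof (induction n)
  case 0
  then show ?case using assms by simp
next
  case (Suc n)
  then show ?case using assms[of "2 * n + 2"] by simp
qed

lemma ballot_convolution_odd:
  assumes "odd m" "odd m'" "m \<le> 2 * n"
  shows "(\<Sum>k = 1..n. ballot m (2 * k - 1) * ballot m' (2 * k - 1)) = ballot (m + m') 0"
proof -
  have "(\<Sum>k = 1..n. ballot m (2 * k - 1) * ballot m' (2 * k - 1))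
      = (\<Sum>h < Suc (2 * n). ballot m h * ballot m' h)"
    by (rule sum_odd_eq_sum_if_even_0) (use assms in \<open>simp add: ballot_eq_0_if_odd\<close>)
  also have "\<dots> = ballot (m + m') 0"
    by (rule ballot_convolution) (use assms in simp)
  finally show ?thesis .
qed

lemma a_seq_Suc_minus_4:
  assumes "m \<ge> 1"
  shows "a_seq (Suc m) - 4 * a_seq m = - ballot (2 * m) 0"
proof -
  have "Suc (2 * m) choose Suc m = (2 * m choose m) + (2 * m choose Suc m)"
    by simp
  moreover have "2 * m choose m = (2 * m - 1 choose (m - 1)) + (2 * m - 1 choose m)"
    using assms binomial_Suc_Suc[of "2 * m - 1" "m - 1"] by simp
  moreover have "2 * m - 1 choose (m - 1) = 2 * m - 1 choose m"
    using binomial_symmetric[of "m - 1" "2 * m - 1"] assms by simp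
  ultimately show ?thesis by (simp add: a_seq_def ballot_def)
qed

lemma index_mult_mat_sum:
  "A \<in> carrier_mat n m \<Longrightarrow> B \<in> carrier_mat m p \<Longrightarrow> i < n \<Longrightarrow> j < p
    \<Longrightarrow> (A * B) $$ (i, j) = (\<Sum>k<m. A $$ (i, k) * B $$ (k, j))"
  by (simp add: scalar_prod_def atLeast0LessThan)

lemma sum_lessThan_Suc_split_0:
  "(\<Sum>k < Suc n. f k) = f 0 + (\<Sum>k = 1..n. f k)"
  by (simp add: lessThan_Suc_atMost atMost_atLeast0 sum.atLeast_Suc_atMost)

lemma prod_lessThan_Suc_split_0:
  "(\<Prod>k < Suc n. f k) = f 0 * (\<Prod>k = 1..n. f k)"
  by (simp add: lessThan_Suc_atMost atMost_atLeast0 prod.atLeast_Suc_atMost)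

definition bordered_mat :: "nat \<Rightarrow> (nat \<Rightarrow> 'a) \<Rightarrow> (nat \<Rightarrow> nat \<Rightarrow> 'a) \<Rightarrow> 'a :: comm_ring_1 mat"
  where "bordered_mat n c f = mat (Suc n) (Suc n)
    (\<lambda>(i, j). if i = 0 then (if j = 0 then 1 else 0) else if j = 0 then c i else f i j)"

lemma bordered_mat_carrier [simp]: "bordered_mat n c f \<in> carrier_mat (Suc n) (Suc n)"
  by (simp add: bordered_mat_def)

lemma dim_bordered_mat [simp]:
  "dim_row (bordered_mat n c f) = Suc n" "dim_col (bordered_mat n c f) = Suc n"
  by (simp_all add: bordered_mat_def)

lemma index_bordered_mat [simp]:
  "i \<le> n \<Longrightarrow> j \<le> n \<Longrightarrow> bordered_mat n c f $$ (i, j) =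
    (if i = 0 then (if j = 0 then 1 else 0) else if j = 0 then c i else f i j)"
  by (simp add: bordered_mat_def)

lemma mult_bordered_mat:
  "bordered_mat n c f * bordered_mat n (\<lambda>_. 0) g
    = bordered_mat n c (\<lambda>i j. \<Sum>k = 1..n. f i k * g k j)"
proof (rule eq_matI)
  fix i j assume "i < dim_row (bordered_mat n c (\<lambda>i j. \<Sum>k = 1..n. f i k * g k j))"
    and "j < dim_col (bordered_mat n c (\<lambda>i j. \<Sum>k = 1..n. f i k * g k j))"
  then have ij: "i \<le> n" "j \<le> n" by simp_all
  have "(bordered_mat n c f * bordered_mat n (\<lambda>_. 0) g) $$ (i, j)
      = (\<Sum>k < Suc n. bordered_mat n c f $$ (i, k) * bordered_mat n (\<lambda>_. 0) g $$ (k, j))"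
    using ij by (intro index_mult_mat_sum) auto
  also have "\<dots> = bordered_mat n c f $$ (i, 0) * bordered_mat n (\<lambda>_. 0) g $$ (0, j)
      + (\<Sum>k = 1..n. bordered_mat n c f $$ (i, k) * bordered_mat n (\<lambda>_. 0) g $$ (k, j))"
    by (rule sum_lessThan_Suc_split_0)
  also have "\<dots> = bordered_mat n c (\<lambda>i j. \<Sum>k = 1..n. f i k * g k j) $$ (i, j)"
    using ij by (auto intro!: sum.neutral sum.cong)
  finally show "(bordered_mat n c f * bordered_mat n (\<lambda>_. 0) g) $$ (i, j)
      = bordered_mat n c (\<lambda>i j. \<Sum>k = 1..n. f i k * g k j) $$ (i, j)" .
qed simp_all

lemma det_bordered_mat_lower:
  assumes "\<And>i j. 1 \<le> i \<Longrightarrow> i < j \<Longrightarrow> j \<le> n \<Longrightarrow> f i j = 0"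
  shows "det (bordered_mat n c f) = (\<Prod>i = 1..n. f i i)"
proof -
  have "det (bordered_mat n c f) = (\<Prod>i < Suc n. bordered_mat n c f $$ (i, i))"
    by (subst det_lower_triangular[of "Suc n"])
      (use assms in \<open>auto simp: prod_list_diag_prod atLeast0LessThan\<close>)
  also have "\<dots> = (\<Prod>i = 1..n. f i i)"
    by (subst prod_lessThan_Suc_split_0) (auto intro!: prod.cong)
  finally show ?thesis .
qed

lemma det_bordered_mat_upper:
  assumes "\<And>i j. 1 \<le> j \<Longrightarrow> j < i \<Longrightarrow> i \<le> n \<Longrightarrow> f i j = 0"
  shows "det (bordered_mat n (\<lambda>_. 0) f) = (\<Prod>i = 1..n. f i i)"
proof -
  have "det (bordered_mat n (\<lambda>_. 0) f) = (\<Prod>i < Suc n. bordered_mat n (\<lambda>_. 0) f $$ (i, i))"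
    by (subst det_upper_triangular[of _ "Suc n"])
      (use assms in \<open>auto simp: upper_triangular_def prod_list_diag_prod atLeast0LessThan\<close>)
  also have "\<dots> = (\<Prod>i = 1..n. f i i)"
    by (subst prod_lessThan_Suc_split_0) (auto intro!: prod.cong)
  finally show ?thesis .
qed

lemma bordered_mat_cong:
  assumes "\<And>i j. 1 \<le> i \<Longrightarrow> i \<le> n \<Longrightarrow> 1 \<le> j \<Longrightarrow> j \<le> n \<Longrightarrow> f i j = g i j"
  shows "bordered_mat n c f = bordered_mat n c g"
  by (rule eq_matI) (use assms in auto)

definition col_diff_mat :: "nat \<Rightarrow> 'a \<Rightarrow> 'a :: comm_ring_1 mat" where
  "col_diff_mat n c = mat (Suc n) (Suc n) (\<lambda>(k, j). if k = j then 1 else if Suc k = j then - c else 0)"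

lemma col_diff_mat_carrier: "col_diff_mat n c \<in> carrier_mat (Suc n) (Suc n)"
  by (simp add: col_diff_mat_def)

lemma det_col_diff_mat: "det (col_diff_mat n c) = 1"
  by (subst det_upper_triangular[of _ "Suc n"])
    (auto simp: col_diff_mat_def upper_triangular_def prod_list_diag_prod)

lemma index_mult_col_diff_mat:
  assumes "M \<in> carrier_mat m (Suc n)" "i < m" "j \<le> n"
  shows "(M * col_diff_mat n c) $$ (i, j) = M $$ (i, j) - (if j = 0 then 0 else c * M $$ (i, j - 1))"
proof -
  have "(M * col_diff_mat n c) $$ (i, j) = (\<Sum>k < Suc n. M $$ (i, k) * col_diff_mat n c $$ (k, j))"
    using assms by (intro index_mult_mat_sum[OF _ col_diff_mat_carrier]) auto
  also have "\<dots> = (\<Sum>k < Suc n. (if k = j then M $$ (i, k) else 0)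
      - (if k = j - 1 \<and> j \<noteq> 0 then c * M $$ (i, k) else 0))"
    by (rule sum.cong) (use assms in \<open>auto simp: col_diff_mat_def\<close>)
  also have "\<dots> = M $$ (i, j) - (if j = 0 then 0 else c * M $$ (i, j - 1))"
    using assms by (auto simp: sum_subtractf)
  finally show ?thesis .
qed

definition A_shift_mat :: "nat \<Rightarrow> nat \<Rightarrow> int mat" where
  "A_shift_mat s n = mat (Suc n) (Suc n) (\<lambda>(i, j). if i = 0 then 4 ^ j else a_seq (i + s + j))"

lemma A_mat_eq_A_shift_mat: "A_mat n = A_shift_mat 0 n" "A'_mat n = A_shift_mat 1 n"
  unfolding A_mat_def A'_mat_def A_shift_mat_def by (auto intro!: eq_matI)

lemma A_shift_mat_mult_col_diff_mat:
  "A_shift_mat s n * col_diff_mat n 4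
    = bordered_mat n (\<lambda>i. a_seq (i + s)) (\<lambda>i j. - ballot (2 * (i + j + s - 1)) 0)"
proof (rule eq_matI)
  fix i j assume "i < dim_row (bordered_mat n (\<lambda>i. a_seq (i + s)) (\<lambda>i j. - ballot (2 * (i + j + s - 1)) 0))"
    and "j < dim_col (bordered_mat n (\<lambda>i. a_seq (i + s)) (\<lambda>i j. - ballot (2 * (i + j + s - 1)) 0))"
  then have ij: "i \<le> n" "j \<le> n" by simp_all
  have entry: "(A_shift_mat s n * col_diff_mat n 4) $$ (i, j)
      = A_shift_mat s n $$ (i, j) - (if j = 0 then 0 else 4 * A_shift_mat s n $$ (i, j - 1))"
    by (rule index_mult_col_diff_mat) (use ij in \<open>auto simp: A_shift_mat_def\<close>)
  have "a_seq (i + s + j) - 4 * a_seq (i + s + (j - 1)) = - ballot (2 * (i + j + s - 1)) 0"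
    if "i \<noteq> 0" "j \<noteq> 0"
    using a_seq_Suc_minus_4[of "i + s + j - 1"] that by (simp add: algebra_simps)
  then show "(A_shift_mat s n * col_diff_mat n 4) $$ (i, j)
    = bordered_mat n (\<lambda>i. a_seq (i + s)) (\<lambda>i j. - ballot (2 * (i + j + s - 1)) 0) $$ (i, j)"
    unfolding entry using ij by (cases j) (auto simp: A_shift_mat_def)
qed (simp_all add: A_shift_mat_def col_diff_mat_def)

definition ballot_left_mat :: "(nat \<Rightarrow> int) \<Rightarrow> nat \<Rightarrow> int mat" where
  "ballot_left_mat c n = bordered_mat n c (\<lambda>i k. - ballot (2 * i - 1) (2 * k - 1))"

definition ballot_right_mat :: "nat \<Rightarrow> nat \<Rightarrow> int mat" where
  "ballot_right_mat s n = bordered_mat n (\<lambda>_. 0) (\<lambda>k j. ballot (2 * (j + s) - 1) (2 * k - 1))"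

lemma ballot_mat_carrier [simp]:
  "ballot_left_mat c n \<in> carrier_mat (Suc n) (Suc n)"
  "ballot_right_mat s n \<in> carrier_mat (Suc n) (Suc n)"
  by (simp_all add: ballot_left_mat_def ballot_right_mat_def)

lemma ballot_left_mat_mult_ballot_right_mat:
  "ballot_left_mat c n * ballot_right_mat s n
    = bordered_mat n c (\<lambda>i j. - ballot (2 * (i + j + s - 1)) 0)"
  unfolding ballot_left_mat_def ballot_right_mat_def mult_bordered_mat
proof (rule bordered_mat_cong)
  fix i j assume "1 \<le> i" "i \<le> n" "1 \<le> j" "j \<le> n"
  then have "(\<Sum>k = 1..n. ballot (2 * i - 1) (2 * k - 1) * ballot (2 * (j + s) - 1) (2 * k - 1))
      = ballot (2 * (i + j + s - 1)) 0"
    using ballot_convolution_odd[of "2 * i - 1" "2 * (j + s) - 1" n] by (simp add: algebra_simps)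
  then show "(\<Sum>k = 1..n. - ballot (2 * i - 1) (2 * k - 1) * ballot (2 * (j + s) - 1) (2 * k - 1))
      = - ballot (2 * (i + j + s - 1)) 0"
    by (simp add: sum_negf)
qed

lemma det_ballot_left_mat: "det (ballot_left_mat c n) = (-1) ^ n"
  unfolding ballot_left_mat_def
  by (subst det_bordered_mat_lower) (auto simp: ballot_eq_0_if_gt)

lemma det_ballot_right_mat_0: "det (ballot_right_mat 0 n) = 1"
  unfolding ballot_right_mat_def
  by (subst det_bordered_mat_upper) (auto simp: ballot_eq_0_if_gt)

definition tridiag :: "nat \<Rightarrow> nat \<Rightarrow> int" where
  "tridiag i k = (if k = i then 2 else if k + 1 = i \<or> k = i + 1 then 1 else 0)"

definition tridiag_mat :: "nat \<Rightarrow> int mat" where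
  "tridiag_mat n = bordered_mat n (\<lambda>_. 0) tridiag"

lemma tridiag_mat_carrier [simp]: "tridiag_mat n \<in> carrier_mat (Suc n) (Suc n)"
  by (simp add: tridiag_mat_def)

lemma sum_tridiag:
  assumes "x 0 = 0" "x (Suc n) = 0" "1 \<le> i" "i \<le> n"
  shows "(\<Sum>k = 1..n. tridiag i k * x k) = x (i - 1) + 2 * x i + x (i + 1)"
proof -
  have "(\<Sum>k = 1..n. tridiag i k * x k) = (\<Sum>k = 1..n. (if k = i then 2 * x k else 0)
      + (if k = i - 1 then x k else 0) + (if k = i + 1 then x k else 0))"
    by (rule sum.cong) (use assms in \<open>auto simp: tridiag_def\<close>)
  also have "\<dots> = x (i - 1) + 2 * x i + x (i + 1)"
    using assms by (cases "i = n") (auto simp: sum.distrib)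
  finally show ?thesis .
qed

lemma ballot_odd_Suc_Suc:
  assumes "j \<ge> 1" "i \<ge> 1"
  shows "ballot (2 * j + 1) (2 * i - 1) = ballot (2 * j - 1) (2 * (i - 1) - 1)
    + 2 * ballot (2 * j - 1) (2 * i - 1) + ballot (2 * j - 1) (2 * (i + 1) - 1)"
proof -
  obtain i' j' where ij: "i = Suc i'" "j = Suc j'" using assms by (metis Suc_le_D One_nat_def)
  have "ballot (Suc (2 * j')) 0 = 0" by (simp add: ballot_eq_0_if_odd)
  then show ?thesis
    using ij ballot_Suc_Suc[of "Suc (2 * j')" "2 * i'"]
    by (cases i') (simp_all add: algebra_simps numeral_eq_Suc)
qed

lemma tridiag_mat_mult_ballot_right_mat: "tridiag_mat n * ballot_right_mat 0 n = ballot_right_mat 1 n"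
  unfolding tridiag_mat_def ballot_right_mat_def mult_bordered_mat
proof (rule bordered_mat_cong)
  fix i j assume ij: "1 \<le> i" "i \<le> n" "1 \<le> j" "j \<le> n"
  have "(\<Sum>k = 1..n. tridiag i k * ballot (2 * j - 1) (2 * k - 1))
      = ballot (2 * j - 1) (2 * (i - 1) - 1) + 2 * ballot (2 * j - 1) (2 * i - 1)
        + ballot (2 * j - 1) (2 * (i + 1) - 1)"
    by (rule sum_tridiag) (use ij in \<open>auto simp: ballot_eq_0_if_odd ballot_eq_0_if_gt\<close>)
  then show "(\<Sum>k = 1..n. tridiag i k * ballot (2 * (j + 0) - 1) (2 * k - 1))
      = ballot (2 * (j + 1) - 1) (2 * i - 1)"
    using ballot_odd_Suc_Suc[of j i] ij by simp
qed

definition alternating :: "nat \<Rightarrow> nat \<Rightarrow> int" where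
  "alternating k j = (if k \<le> j then (-1) ^ (j - k) * int k else 0)"

lemma alternating_second_difference:
  assumes "1 \<le> i" "i \<le> j"
  shows "alternating (i - 1) j + 2 * alternating i j + alternating (i + 1) j
    = (if i = j then int i + 1 else 0)"
proof (cases "i = j")
  case True
  with assms show ?thesis by (simp add: alternating_def of_nat_diff)
next
  case False
  then obtain d where d: "j - i = Suc d" using assms by (metis Suc_diff_Suc le_neq_implies_less)
  then have "j - (i - 1) = Suc (Suc d)" "j - (i + 1) = d" "i - 1 \<le> j" using assms by auto
  with d False assms show ?thesis by (simp add: alternating_def of_nat_diff algebra_simps)
qed

lemma det_tridiag_mat: "det (tridiag_mat n) = int n + 1"
proof -
  \<comment> \<open>Right multiplication by the upper triangular matrix \<open>alternating\<close>, with diagonal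
    \<open>1, \<dots>, n\<close>, makes it lower triangular with diagonal \<open>2, \<dots>, n + 1\<close>.\<close>
  define g where "g = (\<lambda>i j. \<Sum>k = 1..n. tridiag i k * alternating k j)"
  have g: "g i j = (if i = j then int i + 1 else 0)" if "1 \<le> i" "i \<le> j" "j \<le> n" for i j
  proof -
    have "g i j = alternating (i - 1) j + 2 * alternating i j + alternating (i + 1) j"
      unfolding g_def by (rule sum_tridiag) (use that in \<open>auto simp: alternating_def\<close>)
    then show ?thesis using alternating_second_difference that by simp
  qed
  have "det (tridiag_mat n) * det (bordered_mat n (\<lambda>_. 0) alternating)
      = det (bordered_mat n (\<lambda>_. 0) g)"
    unfolding g_def by (simp add: tridiag_mat_def det_mult[symmetric, of _ "Suc n"] mult_bordered_mat)
  also have "\<dots> = (\<Prod>i = 1..n. int i + 1)"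
    by (subst det_bordered_mat_lower) (use g in auto)
  also have "\<dots> = (int n + 1) * (\<Prod>i = 1..n. int i)"
    by (induction n) (simp_all add: prod.nat_ivl_Suc' algebra_simps)
  finally have "det (tridiag_mat n) * (\<Prod>i = 1..n. int i) = (int n + 1) * (\<Prod>i = 1..n. int i)"
    by (subst (asm) det_bordered_mat_upper) (auto simp: alternating_def)
  moreover have "(\<Prod>i = 1..n. int i) \<noteq> 0" by simp
  ultimately show ?thesis by simp
qed

lemma det_A_shift_mat: "det (A_shift_mat s n) = (-1) ^ n * det (ballot_right_mat s n)"
proof -
  have "det (A_shift_mat s n) = det (A_shift_mat s n * col_diff_mat n 4)"
    by (simp add: det_mult[of _ "Suc n"] A_shift_mat_def col_diff_mat_carrier det_col_diff_mat)
  also have "\<dots> = det (ballot_left_mat (\<lambda>i. a_seq (i + s)) n * ballot_right_mat s n)"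
    by (simp add: A_shift_mat_mult_col_diff_mat ballot_left_mat_mult_ballot_right_mat)
  finally show ?thesis
    by (simp add: det_mult[of _ "Suc n"] det_ballot_left_mat)
qed

lemma det_ballot_right_mat_1: "det (ballot_right_mat 1 n) = int n + 1"
  using det_mult[of "tridiag_mat n" "Suc n" "ballot_right_mat 0 n"]
  by (simp add: tridiag_mat_mult_ballot_right_mat det_tridiag_mat det_ballot_right_mat_0)

theorem lemma8p1:
  fixes n :: nat
  assumes "n \<ge> 1"
  shows "det (A_mat n) = (-1)^n \<and> det (A'_mat n) = (-1)^n * int (n+1)"
  unfolding A_mat_eq_A_shift_mat det_A_shift_mat det_ballot_right_mat_0 det_ballot_right_mat_1
  by simp

end
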